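(* Let $T$ be a quasi-binary tree with vertex weight function $\omega:V(T)\to\mathbb{R}$. Let $k\ge 2$ be an integer and let $\gamma\in\mathbb{R}$ with $\gamma\ge \omega_3$. If $$\omega(T)\ge \max\left\{\frac{2k-1}{2}\,\omega_1-\frac{1}{2}\,\gamma,\ (2k-1)\,\omega_2-k\gamma\right\},$$ then $$\beta_k(T)\ge \frac{\omega(T)-(k-1)\gamma}{2k-1}.$$
   Context: A binary tree is a tree in which every vertex has degree $3$, except for pending vertices (degree $1$) and one root vertex (degree $2$). A tree is quasi-binary if it is a connected subgraph of a binary tree; in particular every vertex has degree $1$, $2$ or $3$. Given a weight function $\omega:V(T)\to\mathbb{R}$, for a subgraph $H$ write $\omega(H)=\sum_{v\in V(H)}\omega(v)$. For $i=1,2,3$ let $V_i$ be the set of vertices of degree $i$, and let $\omega_i=\max\{\omega(v): v\in V_j \text{ for some } j \text{ with } i\le j\le 3\}$ (the maximum weight of a vertex of degree at least $i$). For an integer $1\le k\le |V(T)|-1$, a $k$-separator of $T$ is a set $F\subseteq E(T)$ with $|F|=k-1$; its deletion yields $k$ connected components $C^1_F(T),\dots,C^k_F(T)$. Define $$\beta_k(T)=\max_{F\subseteq E(T),\,|F|=k-1}\ \min_{1\le i\le k}\omega(C^i_F(T)).$$ *)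

theory Defs
  imports Complex_Main
begin

definition graph :: "'a set \<Rightarrow> 'a set set \<Rightarrow> bool" where
  "graph V E \<longleftrightarrow> finite V \<and> (\<forall>e\<in>E. e \<subseteq> V \<and> card e = 2)"

definition adj :: "'a set set \<Rightarrow> ('a \<times> 'a) set" where
  "adj E = {(u, v). {u, v} \<in> E}"

definition reachable :: "'a set set \<Rightarrow> 'a \<Rightarrow> 'a \<Rightarrow> bool" where
  "reachable E u v \<longleftrightarrow> (u, v) \<in> (adj E)\<^sup>*"

definition connected_graph :: "'a set \<Rightarrow> 'a set set \<Rightarrow> bool" where
  "connected_graph V E \<longleftrightarrow> V \<noteq> {} \<and> (\<forall>u\<in>V. \<forall>v\<in>V. reachable E u v)"

text \<open>Acyclic: no edge lies on a cycle, i.e. deleting any edge disconnects its endpoints.\<close>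
definition acyclic_graph :: "'a set set \<Rightarrow> bool" where
  "acyclic_graph E \<longleftrightarrow> (\<forall>u v. {u, v} \<in> E \<longrightarrow> \<not> reachable (E - {{u, v}}) u v)"

definition is_tree :: "'a set \<Rightarrow> 'a set set \<Rightarrow> bool" where
  "is_tree V E \<longleftrightarrow> graph V E \<and> connected_graph V E \<and> acyclic_graph E"

definition degree :: "'a set set \<Rightarrow> 'a \<Rightarrow> nat" where
  "degree E v = card {e\<in>E. v \<in> e}"

text \<open>Binary tree: every vertex has degree 3, except leaves (degree 1) and exactly one root (degree 2).\<close>
definition binary_tree :: "'a set \<Rightarrow> 'a set set \<Rightarrow> bool" where
  "binary_tree V E \<longleftrightarrow> is_tree V E \<and>
     (\<exists>!r. r \<in> V \<and> degree E r = 2) \<and>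
     (\<forall>v\<in>V. degree E v \<in> {1, 2, 3})"

text \<open>Quasi-binary: a connected subgraph of some binary tree (the host tree lives on a larger
  vertex type so that there is always room for extra vertices).\<close>
definition quasi_binary :: "'a set \<Rightarrow> 'a set set \<Rightarrow> bool" where
  "quasi_binary V E \<longleftrightarrow> graph V E \<and> connected_graph V E \<and>
     (\<exists>(V' :: ('a + nat) set) E'. binary_tree V' E' \<and> Inl ` V \<subseteq> V' \<and> (\<lambda>e. Inl ` e) ` E \<subseteq> E')"

definition wt :: "('a \<Rightarrow> real) \<Rightarrow> 'a set \<Rightarrow> real" where
  "wt \<omega> H = (\<Sum>v\<in>H. \<omega> v)"

definition omega_deg :: "'a set \<Rightarrow> 'a set set \<Rightarrow> ('a \<Rightarrow> real) \<Rightarrow> nat \<Rightarrow> real" where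
  "omega_deg V E \<omega> i = Max {\<omega> v | v. v \<in> V \<and> i \<le> degree E v}"

definition components :: "'a set \<Rightarrow> 'a set set \<Rightarrow> 'a set set" where
  "components V E' = {{u\<in>V. reachable E' v u} | v. v \<in> V}"

definition beta :: "'a set \<Rightarrow> 'a set set \<Rightarrow> ('a \<Rightarrow> real) \<Rightarrow> nat \<Rightarrow> real" where
  "beta V E \<omega> k = Max {Min (wt \<omega> ` components V (E - F)) | F. F \<subseteq> E \<and> card F = k - 1}"

end

(* Put L = (w(T) - (k - 1) gamma) / (2k - 1).  The hypotheses say that w(T) >= (2k - 1) L + (k - 1) gamma,
   that every vertex weighs at most 2L + gamma, every vertex of degree >= 2 at most L + gamma and every
   vertex of degree 3 at most gamma.  Under these conditions k - 1 edges can be cut so that every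
   component weighs at least L; this is proved by induction along a leaf-by-leaf construction of T.
   Let l be the last leaf, attached to u.  If w(l) >= L, cut the edge lu and recurse with k - 1: the
   budget drops by w(l) <= 2L + gamma, which is exactly what k - 1 needs.  Otherwise contract l into u,
   adding w(l) < L to w(u).  In the smaller tree u has degree one less (at most 2), and its old bounds
   (L + gamma, resp. gamma if its degree was 3) become the bounds 2L + gamma, resp. L + gamma, required
   there.  If k is the number of vertices, the budget forces every single vertex to weigh at least L. *)

theory Submission
  imports Defs
begin

lemma sym_adj: "sym (adj E)"
  by (auto simp: sym_def adj_def insert_commute)

lemma reachable_refl [simp]: "reachable E u u"
  by (simp add: reachable_def)

lemma reachable_sym: "reachable E u v \<Longrightarrow> reachable E v u"
  unfolding reachable_def using sym_rtrancl[OF sym_adj] by (rule symD)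

lemma reachable_trans: "reachable E u v \<Longrightarrow> reachable E v w \<Longrightarrow> reachable E u w"
  unfolding reachable_def by (rule rtrancl_trans)

lemma reachable_mono: "E \<subseteq> E' \<Longrightarrow> reachable E u v \<Longrightarrow> reachable E' u v"
  unfolding reachable_def adj_def by (erule rtrancl_mono[THEN subsetD, rotated]) blast

lemma reachable_edge: "{u, v} \<in> E \<Longrightarrow> reachable E u v"
  by (auto simp: reachable_def adj_def)

lemma reachable_from_isolated: "\<forall>e\<in>E. l \<notin> e \<Longrightarrow> reachable E l x \<Longrightarrow> x = l"
  unfolding reachable_def by (erule converse_rtranclE) (auto simp: adj_def)

lemma graph_finite_edges: "graph V E \<Longrightarrow> finite E"
  unfolding graph_def by (simp add: finite_subset[of E "Pow V"] subset_iff)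

lemma degree_pos_if_reachable:
  assumes "finite E" "reachable E v w" "v \<noteq> w"
  shows "1 \<le> degree E v"
proof -
  obtain y where "{v, y} \<in> E"
    using assms(2,3) unfolding reachable_def by (auto elim: converse_rtranclE simp: adj_def)
  then have "{e\<in>E. v \<in> e} \<noteq> {}" by blast
  then show ?thesis
    using assms(1) unfolding degree_def by (simp add: Suc_le_eq card_gt_0_iff)
qed

lemma degree_mono: "finite E \<Longrightarrow> E0 \<subseteq> E \<Longrightarrow> degree E0 v \<le> degree E v"
  unfolding degree_def by (rule card_mono) auto

lemma degree_insert:
  "finite E \<Longrightarrow> e \<notin> E \<Longrightarrow> v \<in> e \<Longrightarrow> degree (insert e E) v = degree E v + 1"
proof -
  assume "finite E" "e \<notin> E" "v \<in> e"
  then have "{x\<in>insert e E. v \<in> x} = insert e {x\<in>E. v \<in> x}" "e \<notin> {x\<in>E. v \<in> x}" by auto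
  then show ?thesis using \<open>finite E\<close> unfolding degree_def by simp
qed

section \<open>Trees grown leaf by leaf\<close>

inductive leaf_tree :: "'a set \<Rightarrow> 'a set set \<Rightarrow> bool" where
  single: "leaf_tree {v} {}"
| add_leaf: "leaf_tree V E \<Longrightarrow> l \<notin> V \<Longrightarrow> u \<in> V \<Longrightarrow> leaf_tree (insert l V) (insert {l, u} E)"

lemma leaf_tree_graph: "leaf_tree V E \<Longrightarrow> graph V E"
proof (induction rule: leaf_tree.induct)
  case (add_leaf V E l u)
  then have "l \<noteq> u" by blast
  then have "card {l, u} = 2" by simp
  with add_leaf show ?case unfolding graph_def by auto
qed (simp add: graph_def)

lemma leaf_tree_card_edges: "leaf_tree V E \<Longrightarrow> card E + 1 = card V"
proof (induction rule: leaf_tree.induct)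
  case (add_leaf V E l u)
  have "graph V E" by (rule leaf_tree_graph[OF add_leaf.hyps(1)])
  then have "finite V" "finite E" "{l, u} \<notin> E"
    using add_leaf.hyps(2) graph_finite_edges unfolding graph_def by auto
  with add_leaf show ?case by simp
qed simp

lemma leaf_tree_connected: "leaf_tree V E \<Longrightarrow> connected_graph V E"
proof (induction rule: leaf_tree.induct)
  case (add_leaf V E l u)
  have "reachable (insert {l, u} E) u x" if "x \<in> insert l V" for x
  proof (cases "x = l")
    case True
    then show ?thesis by (simp add: reachable_edge insert_commute)
  next
    case False
    with that add_leaf.IH add_leaf.hyps(3) show ?thesis
      unfolding connected_graph_def by (metis insertE reachable_mono subset_insertI)
  qed
  then show ?case
    unfolding connected_graph_def by (blast intro: reachable_trans[OF reachable_sym])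
qed (simp add: connected_graph_def)

lemma leaf_tree_degree_pos:
  assumes "leaf_tree V E" "2 \<le> card V" "v \<in> V"
  shows "1 \<le> degree E v"
proof -
  have "V \<noteq> {v}" using assms(2) by auto
  then obtain w where "w \<in> V" "w \<noteq> v" using assms(3) by blast
  then show ?thesis
    using assms leaf_tree_connected[OF assms(1)] graph_finite_edges[OF leaf_tree_graph[OF assms(1)]]
    unfolding connected_graph_def by (blast intro: degree_pos_if_reachable)
qed

lemma leaf_tree_glue:
  "leaf_tree B EB \<Longrightarrow> leaf_tree A EA \<Longrightarrow> A \<inter> B = {} \<Longrightarrow> a \<in> A \<Longrightarrow> b \<in> B
   \<Longrightarrow> leaf_tree (A \<union> B) (insert {a, b} (EA \<union> EB))"
proof (induction arbitrary: A EA a b rule: leaf_tree.induct)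
  case (single v)
  then have "leaf_tree (insert v A) (insert {v, a} EA)"
    by (blast intro: leaf_tree.add_leaf)
  moreover have "A \<union> {v} = insert v A" "insert {a, b} (EA \<union> {}) = insert {v, a} EA"
    using single by auto
  ultimately show ?case by simp
next
  case (add_leaf B EB l u)
  show ?case
  proof (cases "b = l")
    case True
    have "leaf_tree (insert l A) (insert {l, a} EA)"
      using add_leaf.prems by (blast intro: leaf_tree.add_leaf)
    then have "leaf_tree (insert l A \<union> B) (insert {l, u} (insert {l, a} EA \<union> EB))"
      using add_leaf by (intro add_leaf.IH) auto
    moreover have "insert {a, b} (EA \<union> insert {l, u} EB) = insert {l, u} (insert {l, a} EA \<union> EB)"
      using True by (auto simp: insert_commute)
    ultimately show ?thesis by (simp add: insert_commute)
  next
    case False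
    then have "leaf_tree (A \<union> B) (insert {a, b} (EA \<union> EB))"
      using add_leaf by (intro add_leaf.IH) auto
    then have "leaf_tree (insert l (A \<union> B)) (insert {l, u} (insert {a, b} (EA \<union> EB)))"
      using add_leaf by (intro leaf_tree.add_leaf) auto
    then show ?thesis by (simp add: insert_commute)
  qed
qed

lemma acyclic_graph_mono: "acyclic_graph E \<Longrightarrow> E0 \<subseteq> E \<Longrightarrow> acyclic_graph E0"
  unfolding acyclic_graph_def by (meson Diff_mono order_refl reachable_mono subsetD)

lemma reachable_delete_edge:
  "reachable E a x \<Longrightarrow> reachable (E - {{a, b}}) a x \<or> reachable (E - {{a, b}}) b x"
  unfolding reachable_def
proof (induction rule: rtrancl_induct)
  case (step y z)
  show ?case
  proof (cases "{y, z} = {a, b}")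
    case True
    then have "z = a \<or> z = b" by (metis doubleton_eq_iff)
    then show ?thesis by auto
  next
    case False
    with step.hyps(2) have "(y, z) \<in> adj (E - {{a, b}})" by (simp add: adj_def)
    with step.IH show ?thesis by (meson rtrancl.rtrancl_into_rtrancl)
  qed
qed simp

lemma reachable_within_component:
  assumes "\<forall>f\<in>E. f \<subseteq> V" "reachable E a x"
  shows "reachable {f\<in>E. f \<subseteq> {y\<in>V. reachable E a y}} a x"
  using assms(2) unfolding reachable_def
proof (induction rule: rtrancl_induct)
  case (step y z)
  have yz: "{y, z} \<in> E" using step.hyps(2) by (simp add: adj_def)
  have "reachable E a y" using step.hyps(1) by (simp add: reachable_def)
  then have "{y, z} \<subseteq> {y\<in>V. reachable E a y}"
    using yz assms(1) reachable_trans[OF _ reachable_edge[OF yz]] by auto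
  with yz have "(y, z) \<in> adj {f\<in>E. f \<subseteq> {y\<in>V. reachable E a y}}" by (simp add: adj_def)
  with step.IH show ?case unfolding reachable_def by (rule rtrancl.rtrancl_into_rtrancl)
qed simp

lemma is_tree_side:
  assumes tree: "is_tree V E" and ab: "{a, b} \<in> E"
  defines "A \<equiv> {x\<in>V. reachable (E - {{a, b}}) a x}"
  shows "is_tree A {f\<in>E - {{a, b}}. f \<subseteq> A}"
proof -
  have edges: "\<forall>e\<in>E. e \<subseteq> V \<and> card e = 2" and "acyclic_graph E"
    using tree unfolding is_tree_def graph_def by auto
  have "a \<in> A" using edges ab unfolding A_def by auto
  have "reachable {f\<in>E - {{a, b}}. f \<subseteq> A} a y" if "y \<in> A" for y
    using that edges reachable_within_component[of "E - {{a, b}}" V a y] unfolding A_def by blast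
  then have "connected_graph A {f\<in>E - {{a, b}}. f \<subseteq> A}"
    using \<open>a \<in> A\<close> unfolding connected_graph_def by (blast intro: reachable_trans[OF reachable_sym])
  moreover have "graph A {f\<in>E - {{a, b}}. f \<subseteq> A}"
    using tree edges unfolding is_tree_def graph_def A_def by auto
  moreover have "acyclic_graph {f\<in>E - {{a, b}}. f \<subseteq> A}"
    using \<open>acyclic_graph E\<close> by (rule acyclic_graph_mono) blast
  ultimately show ?thesis unfolding is_tree_def by blast
qed

lemma tree_edge_split:
  assumes tree: "is_tree V E" and ab: "{a, b} \<in> E"
  defines "A \<equiv> {x\<in>V. reachable (E - {{a, b}}) a x}"
    and "B \<equiv> {x\<in>V. reachable (E - {{a, b}}) b x}"
  shows "A \<inter> B = {}" and "V = A \<union> B"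
    and "E = insert {a, b} ({f\<in>E - {{a, b}}. f \<subseteq> A} \<union> {f\<in>E - {{a, b}}. f \<subseteq> B})"
proof -
  let ?E' = "E - {{a, b}}"
  have edges: "\<forall>e\<in>E. e \<subseteq> V \<and> card e = 2"
    using tree unfolding is_tree_def graph_def by auto
  have "\<not> reachable ?E' a b"
    using tree ab unfolding is_tree_def acyclic_graph_def by blast
  then show "A \<inter> B = {}"
    unfolding A_def B_def by (blast intro: reachable_trans[OF _ reachable_sym])
  have "a \<in> V" using edges ab by blast
  then have reach: "reachable E a x" if "x \<in> V" for x
    using tree that unfolding is_tree_def connected_graph_def by blast
  have "reachable ?E' a x \<or> reachable ?E' b x" if "x \<in> V" for x
    using reachable_delete_edge[OF reach[OF that]] .
  then show V: "V = A \<union> B"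
    unfolding A_def B_def by auto
  have "f \<subseteq> A \<or> f \<subseteq> B" if "f \<in> ?E'" for f
  proof -
    have "card f = 2" using that edges by blast
    then obtain y z where f: "f = {y, z}" by (auto simp: card_2_iff)
    then have "reachable ?E' y z"
      using that by (auto intro: reachable_edge)
    then have "reachable ?E' c z" if "reachable ?E' c y" for c
      using reachable_trans[OF that] by blast
    moreover have "y \<in> V" "z \<in> V" using that edges f by auto
    ultimately show ?thesis
      using V f unfolding A_def B_def by blast
  qed
  then show "E = insert {a, b} ({f\<in>?E'. f \<subseteq> A} \<union> {f\<in>?E'. f \<subseteq> B})"
    using ab by blast
qed

text \<open>Deleting an edge splits a tree into two smaller trees; by induction both are grown leaf by
  leaf, and gluing them along the edge again gives a leaf tree.\<close>

lemma is_tree_imp_leaf_tree: "is_tree V E \<Longrightarrow> leaf_tree V E"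
proof (induction "card V" arbitrary: V E rule: less_induct)
  case less
  have "finite V" and edges: "\<forall>e\<in>E. e \<subseteq> V \<and> card e = 2"
    using less.prems unfolding is_tree_def graph_def by auto
  show ?case
  proof (cases "E = {}")
    case True
    obtain v where "v \<in> V"
      using less.prems unfolding is_tree_def connected_graph_def by blast
    with less.prems True have "V = {v}"
      unfolding is_tree_def connected_graph_def using reachable_from_isolated[of "{}" v] by blast
    with True show ?thesis by (simp add: leaf_tree.single)
  next
    case False
    then obtain a b where ab: "{a, b} \<in> E"
      using edges card_2_iff by (metis all_not_in_conv)
    then have ba: "{b, a} \<in> E" by (simp add: insert_commute)
    have "E - {{b, a}} = E - {{a, b}}" by (simp add: insert_commute)
    note split = tree_edge_split[OF less.prems ab]
      and tree_A = is_tree_side[OF less.prems ab]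
      and tree_B = is_tree_side[OF less.prems ba, unfolded \<open>E - {{b, a}} = E - {{a, b}}\<close>]
    let ?A = "{x\<in>V. reachable (E - {{a, b}}) a x}"
    let ?B = "{x\<in>V. reachable (E - {{a, b}}) b x}"
    have a: "a \<in> ?A" and b: "b \<in> ?B" using ab edges by auto
    then have "card ?A < card V" "card ?B < card V"
      using split(1,2) \<open>finite V\<close> by (auto intro!: psubset_card_mono)
    then have "leaf_tree ?A {f\<in>E - {{a, b}}. f \<subseteq> ?A}" "leaf_tree ?B {f\<in>E - {{a, b}}. f \<subseteq> ?B}"
      using less.hyps tree_A tree_B by auto
    from leaf_tree_glue[OF this(2,1) split(1) a b] show ?thesis
      using split(2,3) by simp
  qed
qed

lemma reachable_image: "reachable E a b \<Longrightarrow> reachable ((`) f ` E) (f a) (f b)"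
  unfolding reachable_def
proof (induction rule: rtrancl_induct)
  case (step y z)
  then have "(f y, f z) \<in> adj ((`) f ` E)"
    unfolding adj_def by (auto intro: image_eqI[where x = "{y, z}"])
  with step.IH show ?case by (rule rtrancl.rtrancl_into_rtrancl)
qed simp

lemma acyclic_graph_embedding:
  assumes "inj f" "(`) f ` E \<subseteq> E'" "acyclic_graph E'"
  shows "acyclic_graph E"
  unfolding acyclic_graph_def
proof (intro allI impI notI)
  fix u v
  assume uv: "{u, v} \<in> E" and "reachable (E - {{u, v}}) u v"
  then have "reachable ((`) f ` (E - {{u, v}})) (f u) (f v)"
    by (simp add: reachable_image)
  moreover have "f ` e \<noteq> {f u, f v}" if "e \<noteq> {u, v}" for e
    using that inj_image_eq_iff[OF assms(1), of e "{u, v}"] by simp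
  then have "(`) f ` (E - {{u, v}}) \<subseteq> E' - {{f u, f v}}"
    using assms(2) by auto
  ultimately have "reachable (E' - {{f u, f v}}) (f u) (f v)"
    by (rule reachable_mono[rotated])
  moreover have "f ` {u, v} \<in> E'" using uv assms(2) by blast
  ultimately show False using assms(3) unfolding acyclic_graph_def by simp
qed

lemma degree_embedding_le:
  assumes "inj f" "(`) f ` E \<subseteq> E'" "finite E'"
  shows "degree E v \<le> degree E' (f v)"
  unfolding degree_def
proof (rule card_inj_on_le)
  show "inj_on ((`) f) {e\<in>E. v \<in> e}"
    using assms(1) by (auto intro: inj_onI simp: inj_image_eq_iff)
  show "(`) f ` {e\<in>E. v \<in> e} \<subseteq> {e\<in>E'. f v \<in> e}" using assms(2) by auto
qed (use assms(3) in simp)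

lemma quasi_binary_is_tree:
  assumes "quasi_binary V E"
  shows "is_tree V E"
proof -
  obtain V' :: "('a + nat) set" and E' where "binary_tree V' E'" "(`) Inl ` E \<subseteq> E'"
    using assms unfolding quasi_binary_def by blast
  then have "acyclic_graph E"
    using acyclic_graph_embedding[OF inj_Inl] unfolding binary_tree_def is_tree_def by blast
  with assms show ?thesis unfolding quasi_binary_def is_tree_def by blast
qed

lemma quasi_binary_degree_le_3:
  assumes "quasi_binary V E" "v \<in> V"
  shows "degree E v \<le> 3"
proof -
  obtain V' :: "('a + nat) set" and E' where
    host: "binary_tree V' E'" "Inl ` V \<subseteq> V'" "(`) Inl ` E \<subseteq> E'"
    using assms(1) unfolding quasi_binary_def by blast
  then have "Inl v \<in> V'" using assms(2) by blast
  with host(1) have "finite E'" "degree E' (Inl v) \<le> 3"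
    using graph_finite_edges unfolding binary_tree_def is_tree_def by auto
  with host(3) show ?thesis using degree_embedding_le[OF inj_Inl] by (meson order_trans)
qed

lemma components_subset: "C \<in> components V E \<Longrightarrow> C \<subseteq> V"
  unfolding components_def by blast

lemma components_image: "components V E = (\<lambda>v. {x\<in>V. reachable E v x}) ` V"
  unfolding components_def by blast

lemma finite_components: "finite V \<Longrightarrow> finite (components V E)"
  unfolding components_image by simp

lemma components_nonempty: "V \<noteq> {} \<Longrightarrow> components V E \<noteq> {}"
  unfolding components_def by blast

lemma components_connected: "connected_graph V E \<Longrightarrow> components V E = {V}"
  unfolding connected_graph_def components_def by blast

lemma components_no_edges: "components V {} = (\<lambda>v. {v}) ` V"
proof -
  have "{x\<in>V. reachable {} v x} = {v}" if "v \<in> V" for v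
    using that reachable_from_isolated[of "{}" v] by auto
  then show ?thesis unfolding components_def by auto
qed

lemma components_insert_isolated:
  assumes "l \<notin> V" "\<forall>e\<in>E. l \<notin> e"
  shows "components (insert l V) E = insert {l} (components V E)"
proof -
  have l_iff: "v = l \<longleftrightarrow> x = l" if "reachable E v x" for v x
    using reachable_from_isolated[OF assms(2)] that reachable_sym[OF that] by auto
  then have "{x\<in>insert l V. reachable E l x} = {l}" by auto
  moreover have "{x\<in>insert l V. reachable E v x} = {x\<in>V. reachable E v x}" if "v \<in> V" for v
    using that assms(1) l_iff by auto
  then have "(\<lambda>v. {x\<in>insert l V. reachable E v x}) ` V = components V E"
    unfolding components_image by (rule image_cong[OF refl])
  ultimately show ?thesis
    unfolding components_image[of "insert l V"] image_insert by simp
qed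

lemma reachable_insert_pendant_iff:
  fixes l u :: 'a
  assumes "\<forall>e\<in>E. l \<notin> e"
  defines "\<sigma> \<equiv> \<lambda>x. if x = l then u else x"
  shows "reachable (insert {l, u} E) x y \<longleftrightarrow> reachable E (\<sigma> x) (\<sigma> y)"
proof
  show "reachable E (\<sigma> x) (\<sigma> y)" if "reachable (insert {l, u} E) x y"
    using that unfolding reachable_def
  proof (induction rule: rtrancl_induct)
    case (step y z)
    then have "{y, z} = {l, u} \<or> {y, z} \<in> E" by (simp add: adj_def)
    then show ?case
    proof
      assume "{y, z} = {l, u}"
      then have "\<sigma> y = \<sigma> z" unfolding \<sigma>_def by (metis doubleton_eq_iff)
      with step.IH show ?case by simp
    next
      assume yz: "{y, z} \<in> E"
      with assms(1) have "(\<sigma> y, \<sigma> z) \<in> adj E" unfolding \<sigma>_def adj_def by auto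
      with step.IH show ?case by (rule rtrancl.rtrancl_into_rtrancl)
    qed
  qed simp
next
  have to_\<sigma>: "reachable (insert {l, u} E) x (\<sigma> x)" for x
    unfolding \<sigma>_def by (simp add: reachable_edge)
  assume "reachable E (\<sigma> x) (\<sigma> y)"
  then have "reachable (insert {l, u} E) (\<sigma> x) (\<sigma> y)"
    by (rule reachable_mono[rotated]) blast
  then show "reachable (insert {l, u} E) x y"
    by (meson to_\<sigma> reachable_sym reachable_trans)
qed

lemma components_insert_pendant:
  assumes "l \<notin> V" "u \<in> V" "\<forall>e\<in>E. l \<notin> e"
    and "C \<in> components (insert l V) (insert {l, u} E)"
  shows "\<exists>C0\<in>components V E. C = (if u \<in> C0 then insert l C0 else C0)"
proof -
  obtain v where v: "v \<in> insert l V" "C = {x\<in>insert l V. reachable (insert {l, u} E) v x}"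
    using assms(4) unfolding components_def by blast
  define v' where "v' = (if v = l then u else v)"
  have "v' \<in> V" using v(1) assms(2) unfolding v'_def by auto
  have "C = {x\<in>insert l V. reachable E v' (if x = l then u else x)}"
    using v(2) reachable_insert_pendant_iff[OF assms(3)] unfolding v'_def by simp
  also have "\<dots> = (let C0 = {x\<in>V. reachable E v' x} in if u \<in> C0 then insert l C0 else C0)"
    using assms(1,2) by (auto simp: Let_def)
  finally show ?thesis
    using \<open>v' \<in> V\<close> unfolding components_def Let_def by blast
qed

lemma wt_merge_pendant:
  assumes "finite C" "l \<notin> C"
  shows "wt \<omega> (if u \<in> C then insert l C else C) = wt (\<omega>(u := \<omega> u + \<omega> l)) C"
proof (cases "u \<in> C")
  case True
  have "wt (\<omega>(u := \<omega> u + \<omega> l)) C = \<omega> u + \<omega> l + (\<Sum>x\<in>C - {u}. \<omega> x)"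
    unfolding wt_def using assms(1) True by (simp add: sum.remove)
  also have "\<dots> = \<omega> l + wt \<omega> C"
    unfolding wt_def using assms(1) True by (simp add: sum.remove)
  finally show ?thesis using True assms unfolding wt_def by simp
next
  case False
  then show ?thesis unfolding wt_def by (auto intro: sum.cong)
qed

section \<open>Separators with heavy components\<close>

definition heavy_separator :: "'a set \<Rightarrow> 'a set set \<Rightarrow> ('a \<Rightarrow> real) \<Rightarrow> nat \<Rightarrow> real \<Rightarrow> bool" where
  "heavy_separator V E \<omega> k L \<longleftrightarrow>
     (\<exists>F\<subseteq>E. card F = k - 1 \<and> (\<forall>C\<in>components V (E - F). L \<le> wt \<omega> C))"

lemma heavy_separator_le_beta:
  assumes "finite V" "V \<noteq> {}" "finite E" "heavy_separator V E \<omega> k L"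
  shows "L \<le> beta V E \<omega> k"
proof -
  obtain F where F: "F \<subseteq> E" "card F = k - 1" "\<forall>C\<in>components V (E - F). L \<le> wt \<omega> C"
    using assms(4) unfolding heavy_separator_def by blast
  let ?S = "{Min (wt \<omega> ` components V (E - F)) | F. F \<subseteq> E \<and> card F = k - 1}"
  have "finite ?S"
    using assms(3) by (auto intro: finite_subset[of _ "(\<lambda>F. Min (wt \<omega> ` components V (E - F))) ` Pow E"])
  have "L \<le> Min (wt \<omega> ` components V (E - F))"
    using F(3) finite_components[OF assms(1)] components_nonempty[OF assms(2)] by simp
  also have "\<dots> \<le> Max ?S"
    using F(1,2) \<open>finite ?S\<close> by (intro Max_ge) blast+
  finally show ?thesis unfolding beta_def .
qed

lemma heavy_separator_one:
  "connected_graph V E \<Longrightarrow> L \<le> wt \<omega> V \<Longrightarrow> heavy_separator V E \<omega> 1 L"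
  unfolding heavy_separator_def using components_connected[of V E] by force

lemma heavy_separator_all_edges:
  "card E = card V - 1 \<Longrightarrow> \<forall>v\<in>V. L \<le> \<omega> v \<Longrightarrow> heavy_separator V E \<omega> (card V) L"
  unfolding heavy_separator_def by (intro exI[of _ E]) (auto simp: components_no_edges wt_def)

lemma heavy_separator_cut_leaf:
  assumes "graph V E" "l \<notin> V" "1 \<le> k" "heavy_separator V E \<omega> k L" "L \<le> \<omega> l"
  shows "heavy_separator (insert l V) (insert {l, u} E) \<omega> (Suc k) L"
proof -
  obtain F where F: "F \<subseteq> E" "card F = k - 1" "\<forall>C\<in>components V (E - F). L \<le> wt \<omega> C"
    using assms(4) unfolding heavy_separator_def by blast
  have no_l: "\<forall>e\<in>E. l \<notin> e" using assms(1,2) unfolding graph_def by blast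
  then have "{l, u} \<notin> E" by blast
  moreover have "finite F" using F(1) graph_finite_edges[OF assms(1)] by (rule finite_subset)
  ultimately have "card (insert {l, u} F) = k" using F(1,2) assms(3) by (subst card_insert_disjoint) auto
  moreover have "insert {l, u} E - insert {l, u} F = E - F" using \<open>{l, u} \<notin> E\<close> by blast
  moreover have "components (insert l V) (E - F) = insert {l} (components V (E - F))"
    using assms(2) no_l by (intro components_insert_isolated) auto
  ultimately show ?thesis
    unfolding heavy_separator_def using F assms(5)
    by (intro exI[of _ "insert {l, u} F"]) (auto simp: wt_def)
qed

lemma heavy_separator_merge_leaf:
  assumes "graph V E" "l \<notin> V" "u \<in> V" "heavy_separator V E (\<omega>(u := \<omega> u + \<omega> l)) k L"
  shows "heavy_separator (insert l V) (insert {l, u} E) \<omega> k L"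
proof -
  obtain F where F: "F \<subseteq> E" "card F = k - 1"
    "\<forall>C\<in>components V (E - F). L \<le> wt (\<omega>(u := \<omega> u + \<omega> l)) C"
    using assms(4) unfolding heavy_separator_def by blast
  have no_l: "\<forall>e\<in>E. l \<notin> e" using assms(1,2) unfolding graph_def by blast
  with F(1) have "insert {l, u} E - F = insert {l, u} (E - F)" by blast
  moreover have "L \<le> wt \<omega> C" if C: "C \<in> components (insert l V) (insert {l, u} (E - F))" for C
  proof -
    obtain C0 where C0: "C0 \<in> components V (E - F)" "C = (if u \<in> C0 then insert l C0 else C0)"
      using components_insert_pendant[OF assms(2,3) _ C] no_l by blast
    then have "C0 \<subseteq> V" by (simp add: components_subset)
    then have "finite C0" "l \<notin> C0"
      using assms(1,2) finite_subset unfolding graph_def by auto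
    with C0 F(3) show ?thesis by (simp add: wt_merge_pendant)
  qed
  ultimately show ?thesis
    unfolding heavy_separator_def using F(1,2) by (intro exI[of _ F]) auto
qed

section \<open>The leaf induction\<close>

definition weight_bounds :: "'a set \<Rightarrow> 'a set set \<Rightarrow> ('a \<Rightarrow> real) \<Rightarrow> real \<Rightarrow> real \<Rightarrow> bool" where
  "weight_bounds V E \<omega> L \<gamma> \<longleftrightarrow>
     (\<forall>v\<in>V. \<omega> v \<le> 2 * L + \<gamma> \<and> (2 \<le> degree E v \<longrightarrow> \<omega> v \<le> L + \<gamma>) \<and> (3 \<le> degree E v \<longrightarrow> \<omega> v \<le> \<gamma>))"

lemma weight_bounds_subgraph:
  assumes "weight_bounds V E \<omega> L \<gamma>" "V0 \<subseteq> V" "E0 \<subseteq> E" "finite E"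
  shows "weight_bounds V0 E0 \<omega> L \<gamma>"
proof -
  have "degree E0 v \<le> degree E v" for v using assms(4,3) by (rule degree_mono)
  with assms(1,2) show ?thesis unfolding weight_bounds_def by (meson order_trans subsetD)
qed

lemma weight_bounds_merge_leaf:
  assumes bounds: "weight_bounds (insert l V) (insert {l, u} E) \<omega> L \<gamma>"
    and "finite E" "{l, u} \<notin> E" "u \<in> V" "1 \<le> degree E u" "degree E u \<le> 2" "\<omega> l < L"
  shows "weight_bounds V E (\<omega>(u := \<omega> u + \<omega> l)) L \<gamma>"
  unfolding weight_bounds_def
proof
  fix v assume "v \<in> V"
  show "(\<omega>(u := \<omega> u + \<omega> l)) v \<le> 2 * L + \<gamma> \<and>
    (2 \<le> degree E v \<longrightarrow> (\<omega>(u := \<omega> u + \<omega> l)) v \<le> L + \<gamma>) \<and>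
    (3 \<le> degree E v \<longrightarrow> (\<omega>(u := \<omega> u + \<omega> l)) v \<le> \<gamma>)"
  proof (cases "v = u")
    case True
    have "degree (insert {l, u} E) u = degree E u + 1"
      using assms(2,3) by (rule degree_insert) simp
    with bounds assms(4-7) True show ?thesis unfolding weight_bounds_def by auto
  next
    case False
    have "degree E v \<le> degree (insert {l, u} E) v" using assms(2) by (intro degree_mono) auto
    with bounds \<open>v \<in> V\<close> False show ?thesis unfolding weight_bounds_def by auto
  qed
qed

lemma vertex_weight_ge_of_total:
  assumes "finite V" "v \<in> V" "\<forall>x\<in>V. \<omega> x \<le> 2 * L + \<gamma>"
    and "(2 * real (card V) - 1) * L + (real (card V) - 1) * \<gamma> \<le> wt \<omega> V"
  shows "L \<le> \<omega> v"
proof -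
  have "wt \<omega> V = \<omega> v + (\<Sum>x\<in>V - {v}. \<omega> x)"
    unfolding wt_def using assms(1,2) by (rule sum.remove)
  also have "(\<Sum>x\<in>V - {v}. \<omega> x) \<le> real (card (V - {v})) * (2 * L + \<gamma>)"
    using assms(3) by (intro sum_bounded_above) auto
  also have "real (card (V - {v})) = real (card V) - 1"
  proof -
    have "1 \<le> card V" using assms(1,2) card_0_eq by fastforce
    then show ?thesis using assms(1,2) by (simp add: of_nat_diff)
  qed
  finally show ?thesis using assms(4) by (simp add: algebra_simps)
qed

lemma leaf_tree_heavy_separator:
  assumes "leaf_tree V E" "\<forall>v\<in>V. degree E v \<le> 3" "1 \<le> k" "k \<le> card V"
    and "(2 * real k - 1) * L + (real k - 1) * \<gamma> \<le> wt \<omega> V" "weight_bounds V E \<omega> L \<gamma>"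
  shows "heavy_separator V E \<omega> k L"
  using assms
proof (induction arbitrary: k \<omega> rule: leaf_tree.induct)
  case (single v)
  then have "L \<le> wt \<omega> {v}" by (simp add: wt_def)
  then have "heavy_separator {v} {} \<omega> 1 L"
    by (rule heavy_separator_one[OF leaf_tree_connected[OF leaf_tree.single]])
  with single show ?case by simp
next
  case (add_leaf V E l u)
  let ?V = "insert l V" and ?E = "insert {l, u} E"
  have tree: "leaf_tree ?V ?E" using add_leaf.hyps by (rule leaf_tree.add_leaf)
  have "graph V E" using add_leaf.hyps(1) by (rule leaf_tree_graph)
  then have "finite V" "finite E" "{l, u} \<notin> E"
    using add_leaf.hyps(2) graph_finite_edges unfolding graph_def by auto
  have wt_V: "wt \<omega> ?V = wt (\<omega>(u := \<omega> u + \<omega> l)) V"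
    using wt_merge_pendant[OF \<open>finite V\<close> add_leaf.hyps(2), where \<omega> = \<omega> and u = u]
      add_leaf.hyps(3) by simp
  have "degree E v \<le> degree ?E v" for v using \<open>finite E\<close> by (intro degree_mono) auto
  then have deg_le: "\<forall>v\<in>V. degree E v \<le> 3"
    using add_leaf.prems(1) by (meson insertCI order_trans)
  have bounds: "weight_bounds V E \<omega> L \<gamma>"
    by (rule weight_bounds_subgraph[OF add_leaf.prems(5)]) (use \<open>finite E\<close> in auto)
  consider "k = 1" | "k = card ?V" | "2 \<le> k" "k \<le> card V"
    using add_leaf.prems(2,3) \<open>finite V\<close> add_leaf.hyps(2) by force
  then show ?case
  proof cases
    case 1
    with add_leaf.prems(4) show ?thesis
      using heavy_separator_one[OF leaf_tree_connected[OF tree]] by simp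
  next
    case 2
    have "\<forall>x\<in>?V. \<omega> x \<le> 2 * L + \<gamma>"
      using add_leaf.prems(5) unfolding weight_bounds_def by blast
    then have "\<forall>v\<in>?V. L \<le> \<omega> v"
      using vertex_weight_ge_of_total[of ?V] \<open>finite V\<close> add_leaf.prems(4) 2 by simp
    with 2 show ?thesis
      using leaf_tree_card_edges[OF tree] by (simp add: heavy_separator_all_edges)
  next
    case 3
    show ?thesis
    proof (cases "L \<le> \<omega> l")
      case True
      have "\<omega> l \<le> 2 * L + \<gamma>" using add_leaf.prems(5) unfolding weight_bounds_def by simp
      with add_leaf.prems(4) 3(1) have "(2 * real (k - 1) - 1) * L + (real (k - 1) - 1) * \<gamma> \<le> wt \<omega> V"
        using \<open>finite V\<close> add_leaf.hyps(2) by (simp add: wt_def of_nat_diff algebra_simps)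
      with 3 have "heavy_separator V E \<omega> (k - 1) L"
        using add_leaf.IH deg_le bounds by simp
      moreover have "1 \<le> k - 1" "Suc (k - 1) = k" using 3(1) by auto
      ultimately show ?thesis
        using heavy_separator_cut_leaf[OF \<open>graph V E\<close> add_leaf.hyps(2), of "k - 1"] True by simp
    next
      case False
      have "1 \<le> degree E u"
        using 3 by (intro leaf_tree_degree_pos[OF add_leaf.hyps(1) _ add_leaf.hyps(3)]) simp
      moreover have "degree ?E u = degree E u + 1"
        using \<open>finite E\<close> \<open>{l, u} \<notin> E\<close> by (rule degree_insert) simp
      then have "degree E u \<le> 2" using add_leaf.prems(1) add_leaf.hyps(3) by force
      ultimately have "weight_bounds V E (\<omega>(u := \<omega> u + \<omega> l)) L \<gamma>"
        using weight_bounds_merge_leaf[OF add_leaf.prems(5) \<open>finite E\<close> \<open>{l, u} \<notin> E\<close> add_leaf.hyps(3)]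
          False by simp
      with 3 have "heavy_separator V E (\<omega>(u := \<omega> u + \<omega> l)) k L"
        using add_leaf.IH deg_le add_leaf.prems(4) wt_V by simp
      then show ?thesis
        by (rule heavy_separator_merge_leaf[OF \<open>graph V E\<close> add_leaf.hyps(2,3)])
    qed
  qed
qed

lemma omega_deg_ge:
  assumes "finite V" "v \<in> V" "i \<le> degree E v"
  shows "\<omega> v \<le> omega_deg V E \<omega> i"
proof -
  have "{\<omega> v | v. v \<in> V \<and> i \<le> degree E v} = \<omega> ` {v\<in>V. i \<le> degree E v}" by blast
  with assms show ?thesis unfolding omega_deg_def by (intro Max_ge) auto
qed

lemma weight_bounds_of_omega_deg:
  assumes "finite V" "\<forall>v\<in>V. 1 \<le> degree E v" "\<forall>v\<in>V. 3 \<le> degree E v \<longrightarrow> \<omega> v \<le> \<gamma>"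
    and "omega_deg V E \<omega> 1 \<le> 2 * L + \<gamma>" "omega_deg V E \<omega> 2 \<le> L + \<gamma>"
  shows "weight_bounds V E \<omega> L \<gamma>"
  unfolding weight_bounds_def
  using assms omega_deg_ge[OF assms(1), of _ 1 E \<omega>] omega_deg_ge[OF assms(1), of _ 2 E \<omega>]
  by (meson order_trans)

theorem theorem2:
  fixes V :: "'a set" and E :: "'a set set" and \<omega> :: "'a \<Rightarrow> real"
    and k :: nat and \<gamma> :: real
  assumes "quasi_binary V E"
    and "2 \<le> k" and "k \<le> card V - 1"
    and "\<forall>v\<in>V. 3 \<le> degree E v \<longrightarrow> \<omega> v \<le> \<gamma>"
    and "wt \<omega> V \<ge> max ((2 * real k - 1) / 2 * omega_deg V E \<omega> 1 - \<gamma> / 2)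
                          ((2 * real k - 1) * omega_deg V E \<omega> 2 - real k * \<gamma>)"
  shows "beta V E \<omega> k \<ge> (wt \<omega> V - (real k - 1) * \<gamma>) / (2 * real k - 1)"
proof -
  define L where "L = (wt \<omega> V - (real k - 1) * \<gamma>) / (2 * real k - 1)"
  have "2 * real k - 1 > 0" using assms(2) by simp
  then have total: "(2 * real k - 1) * L + (real k - 1) * \<gamma> = wt \<omega> V"
    and omega: "omega_deg V E \<omega> 1 \<le> 2 * L + \<gamma>" "omega_deg V E \<omega> 2 \<le> L + \<gamma>"
    using assms(5) unfolding L_def by (simp_all add: field_simps)
  have tree: "leaf_tree V E"
    using assms(1) by (intro is_tree_imp_leaf_tree quasi_binary_is_tree)
  then have "finite V" "finite E" using leaf_tree_graph graph_finite_edges graph_def by blast+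
  have "2 \<le> card V" using assms(2,3) by simp
  then have "\<forall>v\<in>V. 1 \<le> degree E v" using leaf_tree_degree_pos[OF tree] by blast
  then have "weight_bounds V E \<omega> L \<gamma>"
    using weight_bounds_of_omega_deg \<open>finite V\<close> assms(4) omega by blast
  moreover have "\<forall>v\<in>V. degree E v \<le> 3" using quasi_binary_degree_le_3[OF assms(1)] by blast
  ultimately have "heavy_separator V E \<omega> k L"
    using assms(2,3) total by (intro leaf_tree_heavy_separator[OF tree]) simp_all
  then show ?thesis
    unfolding L_def[symmetric]
    using heavy_separator_le_beta \<open>finite V\<close> \<open>finite E\<close> \<open>2 \<le> card V\<close> by force
qed

end
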